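(* Let $L$ be a loss function satisfying axioms (A1)–(A7) listed in the context. Then there is a real constant $K$ such that for every finite variable set $V$, every state $\mathbf x\in\{0,1\}^V$ and every $\mathbf p\in[0,1]^V$, $$L(\mathbf x,\mathbf p)=-K\Big(\sum_{i:\,\mathbf x\models X_i}\log\mathbf p_i+\sum_{i:\,\mathbf x\models\neg X_i}\log(1-\mathbf p_i)\Big).$$
   Context: For a finite set $V$ of Boolean variables, a sentence over $V$ is a propositional formula built from variables in $V$; $\mathit{true}$ is the constant true sentence. A state $\mathbf x\in\{0,1\}^V$ is identified both with the sentence conjoining the literals it makes true and with a vector in $[0,1]^V$. A loss function $L$ assigns to every $\mathbf p\in[0,1]^V$ and every sentence $\alpha$ with variables in $V$ a value $L(\alpha,\mathbf p)\in\mathbb R\cup\{+\infty\}$; $-\log 0=+\infty$. $\alpha\models\beta$ means every state satisfying $\alpha$ satisfies $\beta$. For disjoint $X,Y$, $[\mathbf p\,\mathbf q]$ is the concatenation of $\mathbf p\in[0,1]^X$, $\mathbf q\in[0,1]^Y$. (A1) Truth: $L(\mathit{true},\mathbf p)=0$ for all $\mathbf p$. (A2) Additive independence: for $\alpha$ over $X$, $\beta$ over $Y$, $X\cap Y=\emptyset$: $L(\alpha\wedge\beta,[\mathbf p\,\mathbf q])=L(\alpha,\mathbf p)+L(\beta,\mathbf q)$. (A3) Monotonicity: $\alpha\models\beta$ implies $L(\alpha,\mathbf p)\ge L(\beta,\mathbf p)$. (A4) Identity: $L(\mathbf x,\mathbf x)=0$ for every state $\mathbf x$. (A5) Label-literal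 correspondence: for each variable $X$ there are real constants $K_X,K'_X$ with $L(X,p)=-K_X\log p$ and $L(\neg X,p)=-K'_X\log(1-p)$ for all $p\in[0,1]$ (vectors over $\{X\}$). (A6) Value symmetry: $L(\alpha,\mathbf p)=L(\bar\alpha,\mathbf 1-\mathbf p)$, where $\bar\alpha$ replaces each variable by its negation. (A7) Variable symmetry: for a permutation $\pi$ of the variable set of $\mathbf p$, $L(\alpha,\mathbf p)=L(\pi(\alpha),\pi(\mathbf p))$. *)

theory Defs
  imports "HOL-Analysis.Analysis" "HOL-Library.Extended_Real" "HOL-Library.FuncSet"
begin

datatype 'v form = TT | Var 'v | Neg "'v form" | Conj "'v form" "'v form" | Disj "'v form" "'v form"

abbreviation vars :: "'v form \<Rightarrow> 'v set" where "vars \<equiv> set_form"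

fun eval :: "('v \<Rightarrow> bool) \<Rightarrow> 'v form \<Rightarrow> bool" where
  "eval s TT = True"
| "eval s (Var v) = s v"
| "eval s (Neg a) = (\<not> eval s a)"
| "eval s (Conj a b) = (eval s a \<and> eval s b)"
| "eval s (Disj a b) = (eval s a \<or> eval s b)"

definition entails :: "'v form \<Rightarrow> 'v form \<Rightarrow> bool" where
  "entails a b \<longleftrightarrow> (\<forall>s. eval s a \<longrightarrow> eval s b)"

fun dual :: "'v form \<Rightarrow> 'v form" where
  "dual TT = TT"
| "dual (Var v) = Neg (Var v)"
| "dual (Neg a) = Neg (dual a)"
| "dual (Conj a b) = Conj (dual a) (dual b)"
| "dual (Disj a b) = Disj (dual a) (dual b)"

definition vecs :: "'v set \<Rightarrow> ('v \<Rightarrow> real) set" where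
  "vecs V = V \<rightarrow>\<^sub>E {0..1}"

definition states :: "'v set \<Rightarrow> ('v \<Rightarrow> real) set" where
  "states V = V \<rightarrow>\<^sub>E {0,1}"

fun conj_list :: "'v form list \<Rightarrow> 'v form" where
  "conj_list [] = TT"
| "conj_list [a] = a"
| "conj_list (a # as) = Conj a (conj_list as)"

definition lit :: "('v \<Rightarrow> real) \<Rightarrow> 'v \<Rightarrow> 'v form" where
  "lit x v = (if x v = 1 then Var v else Neg (Var v))"

text \<open>The sentence conjoining the literals made true by state x over V
  (in some fixed enumeration order of V; by monotonicity the order is irrelevant).\<close>
definition state_form :: "'v set \<Rightarrow> ('v \<Rightarrow> real) \<Rightarrow> 'v form" where
  "state_form V x = conj_list (map (lit x) (SOME xs. distinct xs \<and> set xs = V))"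

definition nlog :: "real \<Rightarrow> ereal" where
  "nlog p = (if p = 0 then \<infinity> else ereal (- ln p))"

text \<open>A loss function: L V p a for finite V, p in [0,1]^V, a with variables in V;
  values in R \<union> {+\<infinity>}.\<close>
type_synonym 'v loss = "'v set \<Rightarrow> ('v \<Rightarrow> real) \<Rightarrow> 'v form \<Rightarrow> ereal"

definition loss_range :: "'v loss \<Rightarrow> bool" where
  "loss_range L \<longleftrightarrow> (\<forall>V p a. finite V \<longrightarrow> p \<in> vecs V \<longrightarrow> vars a \<subseteq> V \<longrightarrow> L V p a \<noteq> -\<infinity>)"

definition A1 :: "'v loss \<Rightarrow> bool" where
  "A1 L \<longleftrightarrow> (\<forall>V p. finite V \<longrightarrow> p \<in> vecs V \<longrightarrow> L V p TT = 0)"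

definition A2 :: "'v loss \<Rightarrow> bool" where
  "A2 L \<longleftrightarrow> (\<forall>X Y a b p q. finite X \<longrightarrow> finite Y \<longrightarrow> X \<inter> Y = {} \<longrightarrow>
      vars a \<subseteq> X \<longrightarrow> vars b \<subseteq> Y \<longrightarrow> p \<in> vecs X \<longrightarrow> q \<in> vecs Y \<longrightarrow>
      L (X \<union> Y) (\<lambda>v. if v \<in> X then p v else q v) (Conj a b) = L X p a + L Y q b)"

definition A3 :: "'v loss \<Rightarrow> bool" where
  "A3 L \<longleftrightarrow> (\<forall>V p a b. finite V \<longrightarrow> p \<in> vecs V \<longrightarrow> vars a \<subseteq> V \<longrightarrow> vars b \<subseteq> V \<longrightarrow>
      entails a b \<longrightarrow> L V p a \<ge> L V p b)"

definition A4 :: "'v loss \<Rightarrow> bool" where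
  "A4 L \<longleftrightarrow> (\<forall>V x. finite V \<longrightarrow> x \<in> states V \<longrightarrow> L V x (state_form V x) = 0)"

definition A5 :: "'v loss \<Rightarrow> bool" where
  "A5 L \<longleftrightarrow> (\<forall>X. \<exists>K K' :: real. \<forall>p \<in> {0..1}.
      L {X} (\<lambda>v\<in>{X}. p) (Var X) = ereal K * nlog p \<and>
      L {X} (\<lambda>v\<in>{X}. p) (Neg (Var X)) = ereal K' * nlog (1 - p))"

definition A6 :: "'v loss \<Rightarrow> bool" where
  "A6 L \<longleftrightarrow> (\<forall>V p a. finite V \<longrightarrow> p \<in> vecs V \<longrightarrow> vars a \<subseteq> V \<longrightarrow>
      L V p a = L V (\<lambda>v\<in>V. 1 - p v) (dual a))"

text \<open>pi(p) puts p_i at coordinate pi(i); pi(a) renames variables.\<close>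
definition A7 :: "'v loss \<Rightarrow> bool" where
  "A7 L \<longleftrightarrow> (\<forall>V p a \<pi>. finite V \<longrightarrow> p \<in> vecs V \<longrightarrow> vars a \<subseteq> V \<longrightarrow> bij_betw \<pi> V V \<longrightarrow>
      L V p a = L V (\<lambda>v\<in>V. p (inv_into V \<pi> v)) (map_form \<pi> a))"

end

theory Submission
  imports Defs
begin

text \<open>By (A2) the loss of the conjunction of literals of a state splits into the losses of the
  single literals, which (A5) gives as multiples of \<open>-log\<close>. It remains to see that all these
  constants coincide: (A6) at \<open>p = 1/2\<close> identifies the constant of \<open>X\<close> with that of \<open>\<not>X\<close>, and
  (A7), applied to the swap of \<open>X\<close> and \<open>Y\<close> in \<open>X \<and> Y\<close> at the point \<open>(1/2, 1)\<close>, identifies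
  the constants of different variables.\<close>

definition lit_nlog :: "real \<Rightarrow> real \<Rightarrow> ereal" where
  "lit_nlog b a = (if b = 1 then nlog a else nlog (1 - a))"

lemma nlog_nonneg: "a \<in> {0..1} \<Longrightarrow> 0 \<le> nlog a"
  by (auto simp: nlog_def)

lemma nlog_half: "nlog (1/2) = ereal (ln 2)"
  by (simp add: nlog_def ln_div)

lemma nlog_one: "nlog 1 = 0"
  by (simp add: nlog_def zero_ereal_def)

lemma lit_nlog_nonneg: "a \<in> {0..1} \<Longrightarrow> 0 \<le> lit_nlog b a"
  by (simp add: lit_nlog_def nlog_nonneg)

lemma vars_lit: "vars (lit x v) \<subseteq> {v}"
  by (simp add: lit_def)

lemma vars_conj_list_lit: "vars (conj_list (map (lit x) xs)) \<subseteq> set xs"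
  by (induction xs rule: induct_list012) (auto simp: lit_def)

lemma restrict_in_vecs: "p \<in> vecs V \<Longrightarrow> W \<subseteq> V \<Longrightarrow> restrict p W \<in> vecs W"
  by (auto simp: vecs_def)

lemma restrict_singleton: "restrict p {v} = (\<lambda>w\<in>{v}. p v)"
  by auto

lemma vecs_singleton_eq: "p \<in> vecs {v} \<Longrightarrow> (\<lambda>w\<in>{v}. p v) = p"
  by (auto simp: vecs_def PiE_def extensional_def)

lemma state_form_eq:
  assumes "finite V"
  obtains xs where "distinct xs" "set xs = V" "state_form V x = conj_list (map (lit x) xs)"
proof -
  define xs where "xs = (SOME xs. distinct xs \<and> set xs = V)"
  have "distinct xs \<and> set xs = V"
    unfolding xs_def by (rule someI_ex) (use assms finite_distinct_list in blast)
  then show thesis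
    by (intro that[of xs]) (simp_all add: state_form_def xs_def)
qed

lemma A2_restrict:
  assumes "A2 L" "finite X" "finite Y" "X \<inter> Y = {}" "vars a \<subseteq> X" "vars b \<subseteq> Y"
    and p: "p \<in> vecs (X \<union> Y)"
  shows "L (X \<union> Y) p (Conj a b) = L X (restrict p X) a + L Y (restrict p Y) b"
proof -
  have "(\<lambda>v. if v \<in> X then restrict p X v else restrict p Y v) = p"
    using p by (auto simp: vecs_def PiE_def extensional_def)
  with assms(1)[unfolded A2_def, rule_format, OF assms(2-6)
      restrict_in_vecs[OF p Un_upper1] restrict_in_vecs[OF p Un_upper2]]
  show ?thesis by simp
qed

lemma loss_conj_list_lit:
  assumes "A1 L" "A2 L" "distinct xs" "p \<in> vecs (set xs)"
  shows "L (set xs) p (conj_list (map (lit x) xs)) = (\<Sum>i\<in>set xs. L {i} (\<lambda>v\<in>{i}. p i) (lit x i))"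
  using assms(3,4)
proof (induction xs arbitrary: p rule: induct_list012)
  case 1
  then show ?case using assms(1) by (simp add: A1_def)
next
  case (2 v)
  then show ?case by (simp add: vecs_singleton_eq)
next
  case (3 v w ws)
  let ?Y = "set (w # ws)"
  have set_eq: "set (v # w # ws) = {v} \<union> ?Y" by auto
  have p: "p \<in> vecs ({v} \<union> ?Y)" using "3.prems"(2) unfolding set_eq .
  have "L (set (v # w # ws)) p (conj_list (map (lit x) (v # w # ws)))
      = L ({v} \<union> ?Y) p (Conj (lit x v) (conj_list (map (lit x) (w # ws))))"
    by (simp only: set_eq) simp
  also have "\<dots> = L {v} (restrict p {v}) (lit x v)
      + L ?Y (restrict p ?Y) (conj_list (map (lit x) (w # ws)))"
    by (rule A2_restrict[OF assms(2) _ _ _ vars_lit vars_conj_list_lit p]) (use "3.prems"(1) in auto)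
  also have "L ?Y (restrict p ?Y) (conj_list (map (lit x) (w # ws)))
      = (\<Sum>i\<in>?Y. L {i} (\<lambda>u\<in>{i}. restrict p ?Y i) (lit x i))"
    using "3.prems"(1) by (intro "3.IH"(2) restrict_in_vecs[OF p]) auto
  also have "\<dots> = (\<Sum>i\<in>?Y. L {i} (\<lambda>u\<in>{i}. p i) (lit x i))"
    by (rule sum.cong) auto
  also have "L {v} (restrict p {v}) (lit x v) + \<dots> = (\<Sum>i\<in>insert v ?Y. L {i} (\<lambda>u\<in>{i}. p i) (lit x i))"
    using "3.prems"(1) by (subst sum.insert) (simp_all add: restrict_singleton[of p v])
  finally show ?case by (simp only: list.set(2))
qed

lemma sum_lit_nlog_state:
  assumes "finite V" "x \<in> states V"
  shows "(\<Sum>i\<in>V. lit_nlog (x i) (p i))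
    = (\<Sum>i\<in>{i\<in>V. x i = 1}. nlog (p i)) + (\<Sum>i\<in>{i\<in>V. x i = 0}. nlog (1 - p i))"
proof -
  have V: "V = {i\<in>V. x i = 1} \<union> {i\<in>V. x i = 0}" using assms(2) by (auto simp: states_def)
  have "(\<Sum>i\<in>V. lit_nlog (x i) (p i))
      = (\<Sum>i\<in>{i\<in>V. x i = 1}. lit_nlog (x i) (p i)) + (\<Sum>i\<in>{i\<in>V. x i = 0}. lit_nlog (x i) (p i))"
    by (subst V, rule sum.union_disjoint) (use assms(1) in auto)
  then show ?thesis by (simp add: lit_nlog_def)
qed

lemma A6_half_Var_Neg:
  assumes "A6 L"
  shows "L {X} (\<lambda>v\<in>{X}. 1/2) (Var X) = L {X} (\<lambda>v\<in>{X}. 1/2) (Neg (Var X))"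
proof -
  have "L {X} (\<lambda>v\<in>{X}. 1/2) (Var X)
      = L {X} (\<lambda>v\<in>{X}. 1 - (\<lambda>v\<in>{X}. 1/2::real) v) (dual (Var X))"
    by (rule assms[unfolded A6_def, rule_format]) (simp_all add: vecs_def)
  also have "(\<lambda>v\<in>{X}. 1 - (\<lambda>v\<in>{X}. 1/2::real) v) = (\<lambda>v\<in>{X}. 1/2)"
    by (rule restrict_ext) simp
  finally show ?thesis by (simp only: dual.simps)
qed

lemma A7_swap_pair:
  assumes "A7 L" "X \<noteq> Y" "a \<in> {0..1}" "b \<in> {0..1}"
  shows "L {X,Y} (\<lambda>v\<in>{X,Y}. if v = X then a else b) (Conj (Var X) (Var Y))
    = L {X,Y} (\<lambda>v\<in>{X,Y}. if v = Y then a else b) (Conj (Var Y) (Var X))"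
proof -
  define \<pi> where "\<pi> = Transposition.transpose X Y"
  have bij: "bij_betw \<pi> {X,Y} {X,Y}" unfolding \<pi>_def
    by (rule bij_betw_subset[of _ UNIV]) (auto simp: bij_betw_def)
  have swap: "\<pi> X = Y" "\<pi> Y = X" by (simp_all add: \<pi>_def)
  have inv: "inv_into {X,Y} \<pi> v = \<pi> v" if "v \<in> {X,Y}" for v
    using that by (intro inv_into_f_eq[OF bij_betw_imp_inj_on[OF bij]]) (auto simp: \<pi>_def)
  have "(\<lambda>v\<in>{X,Y}. (\<lambda>v\<in>{X,Y}. if v = X then a else b) (inv_into {X,Y} \<pi> v))
      = (\<lambda>v\<in>{X,Y}. if v = Y then a else b)"
    using assms(2) by (intro restrict_ext) (auto simp: inv swap)
  moreover have "map_form \<pi> (Conj (Var X) (Var Y)) = Conj (Var Y) (Var X)"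
    by (simp add: \<pi>_def)
  moreover have "(\<lambda>v\<in>{X,Y}. if v = X then a else b) \<in> vecs {X,Y}"
    using assms(3,4) by (auto simp: vecs_def)
  ultimately show ?thesis
    using assms(1)[unfolded A7_def, rule_format, of "{X,Y}" _ "Conj (Var X) (Var Y)" \<pi>] bij
    by simp
qed

lemma A2_pair:
  assumes "A2 L" "X \<noteq> Y" "p \<in> vecs {X,Y}"
  shows "L {X,Y} p (Conj (Var X) (Var Y)) = L {X} (\<lambda>v\<in>{X}. p X) (Var X) + L {Y} (\<lambda>v\<in>{Y}. p Y) (Var Y)"
proof -
  have "{X,Y} = {X} \<union> {Y}" by blast
  then show ?thesis
    using A2_restrict[OF assms(1), of "{X}" "{Y}" "Var X" "Var Y" p] assms(2,3)
    by (simp only: restrict_singleton[of p X] restrict_singleton[of p Y]) simp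
qed

lemma Var_loss_exchange:
  assumes "A2 L" "A7 L" "X \<noteq> Y" "a \<in> {0..1}" "b \<in> {0..1}"
  shows "L {X} (\<lambda>v\<in>{X}. a) (Var X) + L {Y} (\<lambda>v\<in>{Y}. b) (Var Y)
    = L {Y} (\<lambda>v\<in>{Y}. a) (Var Y) + L {X} (\<lambda>v\<in>{X}. b) (Var X)"
proof -
  have "L {X,Y} (\<lambda>v\<in>{X,Y}. if v = X then a else b) (Conj (Var X) (Var Y))
      = L {X} (\<lambda>v\<in>{X}. a) (Var X) + L {Y} (\<lambda>v\<in>{Y}. b) (Var Y)"
    using assms by (subst A2_pair) (auto simp: vecs_def)
  moreover have "L {Y,X} (\<lambda>v\<in>{Y,X}. if v = Y then a else b) (Conj (Var Y) (Var X))
      = L {Y} (\<lambda>v\<in>{Y}. a) (Var Y) + L {X} (\<lambda>v\<in>{X}. b) (Var X)"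
    using assms by (subst A2_pair) (auto simp: vecs_def)
  moreover have "{Y,X} = {X,Y}" by blast
  ultimately show ?thesis using A7_swap_pair[OF assms(2-5)] by simp
qed

lemma A5_uniform_constant:
  assumes "A2 L" "A5 L" "A6 L" "A7 L"
  obtains K :: real
  where "\<And>X a. a \<in> {0..1} \<Longrightarrow> L {X} (\<lambda>v\<in>{X}. a) (Var X) = ereal K * nlog a"
    and "\<And>X a. a \<in> {0..1} \<Longrightarrow> L {X} (\<lambda>v\<in>{X}. a) (Neg (Var X)) = ereal K * nlog (1 - a)"
proof -
  from assms(2) obtain Kf Kf' where KF: "\<And>X a. a \<in> {0..1} \<Longrightarrow>
      L {X} (\<lambda>v\<in>{X}. a) (Var X) = ereal (Kf X) * nlog a \<and>
      L {X} (\<lambda>v\<in>{X}. a) (Neg (Var X)) = ereal (Kf' X) * nlog (1 - a)"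
    unfolding A5_def by metis
  have Kf': "Kf' X = Kf X" for X
    using A6_half_Var_Neg[OF assms(3), of X] KF[of "1/2" X] by (simp add: nlog_half)
  have Kf: "Kf X = Kf Y" for X Y
    using Var_loss_exchange[OF assms(1,4), of X Y "1/2" 1] KF[of "1/2"] KF[of 1]
    by (cases "X = Y") (simp_all add: nlog_half nlog_one)
  show thesis
  proof (rule that)
    fix X and a :: real
    assume "a \<in> {0..1}"
    then show "L {X} (\<lambda>v\<in>{X}. a) (Var X) = ereal (Kf undefined) * nlog a"
      and "L {X} (\<lambda>v\<in>{X}. a) (Neg (Var X)) = ereal (Kf undefined) * nlog (1 - a)"
      using KF[of a X] Kf'[of X] Kf[of X undefined] by simp_all
  qed
qed

lemma loss_state_form:
  assumes "A1 L" "A2 L"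
    and lit: "\<And>i a. a \<in> {0..1} \<Longrightarrow> L {i} (\<lambda>v\<in>{i}. a) (lit x i) = ereal K * lit_nlog (x i) a"
    and V: "finite V" and x: "x \<in> states V" and p: "p \<in> vecs V"
  shows "L V p (state_form V x) =
    ereal K * ((\<Sum>i\<in>{i\<in>V. x i = 1}. nlog (p i)) + (\<Sum>i\<in>{i\<in>V. x i = 0}. nlog (1 - p i)))"
proof -
  obtain xs where xs: "distinct xs" "set xs = V" "state_form V x = conj_list (map (lit x) xs)"
    using state_form_eq[OF V] .
  have p01: "p i \<in> {0..1}" if "i \<in> V" for i
    using p that by (auto simp: vecs_def)
  have "L V p (state_form V x) = (\<Sum>i\<in>V. L {i} (\<lambda>v\<in>{i}. p i) (lit x i))"
    using loss_conj_list_lit[OF assms(1,2) xs(1)] p xs by simp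
  also have "\<dots> = (\<Sum>i\<in>V. ereal K * lit_nlog (x i) (p i))"
    by (intro sum.cong refl lit p01)
  also have "\<dots> = ereal K * (\<Sum>i\<in>V. lit_nlog (x i) (p i))"
    by (intro sum_ereal_right_distrib[symmetric] lit_nlog_nonneg p01)
  finally show ?thesis
    by (simp only: sum_lit_nlog_state[OF V x])
qed

theorem lemma1:
  fixes L :: "'v loss"
  assumes "loss_range L" "A1 L" "A2 L" "A3 L" "A4 L" "A5 L" "A6 L" "A7 L"
  shows "\<exists>K::real. \<forall>V x p. finite V \<longrightarrow> x \<in> states V \<longrightarrow> p \<in> vecs V \<longrightarrow>
     L V p (state_form V x) =
       ereal K * ((\<Sum>i\<in>{i\<in>V. x i = 1}. nlog (p i)) + (\<Sum>i\<in>{i\<in>V. x i = 0}. nlog (1 - p i)))"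
proof -
  obtain K where KVar: "\<And>X a. a \<in> {0..1} \<Longrightarrow> L {X} (\<lambda>v\<in>{X}. a) (Var X) = ereal K * nlog a"
    and KNeg: "\<And>X a. a \<in> {0..1} \<Longrightarrow> L {X} (\<lambda>v\<in>{X}. a) (Neg (Var X)) = ereal K * nlog (1 - a)"
    using A5_uniform_constant[OF assms(3,6,7,8)] by blast
  have "L {i} (\<lambda>v\<in>{i}. a) (lit x i) = ereal K * lit_nlog (x i) a" if "a \<in> {0..1}" for i x a
    using that KVar KNeg by (simp add: lit_def lit_nlog_def)
  then show ?thesis
    using loss_state_form[OF assms(2,3)] by blast
qed

end
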